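(* Let $n\ge 2$, $N=\{1,\dots,n\}$, for each $i\in N$ let $A_i$ be a nonempty finite set, $A=\prod_{i\in N}A_i$, and let $u_i:A\to\mathbb{R}$ for $i\in N$, with $u(a)=(u_i(a))_{i\in N}$. Then for every $\delta\in(0,1]$ and every $T\in\mathbb{N}$, $$F(\delta,T)=\operatorname{co}\left(\{v(a^{[n]}) : a^{[n]}\in A^n\}\right),$$ where $F(\delta,T)$ and $v$ are as defined in the context.
   Context: For $a^{[nT]}=(a^1,\dots,a^{nT})\in A^{nT}$ extend the indices periodically by $a^s=a^{s-nT}$ for $s\ge nT+1$, and define for $i\in N$ $$U_i(a^{[nT]})=\frac{1}{\sum_{k=1}^{nT}\delta^{k-1}}\sum_{k=1}^{nT}\delta^{k-1}u_i\big(a^{(i-1)T+k}\big),$$ and $U(a^{[nT]})=(U_i(a^{[nT]}))_{i\in N}\in\mathbb{R}^n$. Let $F(\delta,T)=\operatorname{co}\left(\bigcup_{a^{[nT]}\in A^{nT}}\{U(a^{[nT]})\}\right)$, where $\operatorname{co}$ denotes convex hull. For $a^{[n]}=(a^1,\dots,a^n)\in A^n$ extend indices by $a^s=a^{s-n}$ for $s\ge n+1$ and define $$v_i(a^{[n]})=\frac{1}{\sum_{k=1}^n\delta^{(k-1)T}}\sum_{k=1}^n\delta^{(k-1)T}u_i\big(a^{i+k-1}\big),\qquad v(a^{[n]})=(v_i(a^{[n]}))_{i\in N}.$$ (Interpretation: $F(\delta,T)$ is the set of periodic feasible payoffs of the overlapping-generations repeated game in which player $i$ of each generation lives $nT$ periods,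 entering $T$ periods after player $i-1$, with common discount factor $\delta$.) *)

theory Defs
  imports "HOL-Analysis.Analysis"
begin

(* Players are numbered 1..n.  An action profile is a function a :: nat => 'a,
   with a i \<in> Ai i for i \<in> {1..n} (extensional outside {1..n}).
   A finite sequence of profiles a^1..a^m is a function s :: nat => (nat => 'a),
   whose values at positions 1..m matter. *)

definition profiles :: "nat \<Rightarrow> (nat \<Rightarrow> 'a set) \<Rightarrow> (nat \<Rightarrow> 'a) set" where
  "profiles n Ai = PiE {1..n} Ai"

definition seqs :: "nat \<Rightarrow> 'b set \<Rightarrow> (nat \<Rightarrow> 'b) set" where
  "seqs m A = PiE {1..m} (\<lambda>_. A)"

(* periodic extension: a^s = a^{s-m} for s \<ge> m+1 (s \<ge> 1) *)
definition per :: "nat \<Rightarrow> (nat \<Rightarrow> 'b) \<Rightarrow> nat \<Rightarrow> 'b" where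
  "per m s k = s (((k - 1) mod m) + 1)"

definition Upay :: "nat \<Rightarrow> nat \<Rightarrow> real \<Rightarrow> (nat \<Rightarrow> (nat \<Rightarrow> 'a) \<Rightarrow> real)
                    \<Rightarrow> (nat \<Rightarrow> (nat \<Rightarrow> 'a)) \<Rightarrow> nat \<Rightarrow> real" where
  "Upay n T \<delta> u s i =
     (\<Sum>k=1..n*T. \<delta>^(k-1) * u i (per (n*T) s ((i-1)*T + k))) / (\<Sum>k=1..n*T. \<delta>^(k-1))"

definition vpay :: "nat \<Rightarrow> nat \<Rightarrow> real \<Rightarrow> (nat \<Rightarrow> (nat \<Rightarrow> 'a) \<Rightarrow> real)
                    \<Rightarrow> (nat \<Rightarrow> (nat \<Rightarrow> 'a)) \<Rightarrow> nat \<Rightarrow> real" where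
  "vpay n T \<delta> u s i =
     (\<Sum>k=1..n. \<delta>^((k-1)*T) * u i (per n s (i + k - 1))) / (\<Sum>k=1..n. \<delta>^((k-1)*T))"

(* turn a payoff assignment to players 1..n into a vector of R^n, where the
   coordinates 'n are identified with players via the bijection pl : {1..n} -> 'n *)
definition vec_of :: "(nat \<Rightarrow> 'n::finite) \<Rightarrow> nat \<Rightarrow> (nat \<Rightarrow> real) \<Rightarrow> real^'n" where
  "vec_of pl n f = (\<chi> j. f (the_inv_into {1..n} pl j))"

definition Fset :: "(nat \<Rightarrow> 'n::finite) \<Rightarrow> nat \<Rightarrow> (nat \<Rightarrow> 'a set)
                    \<Rightarrow> (nat \<Rightarrow> (nat \<Rightarrow> 'a) \<Rightarrow> real) \<Rightarrow> real \<Rightarrow> nat \<Rightarrow> (real^'n) set" where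
  "Fset pl n Ai u \<delta> T =
     convex hull ((\<lambda>s. vec_of pl n (Upay n T \<delta> u s)) ` seqs (n*T) (profiles n Ai))"

end

theory Submission
  imports Defs
begin

text \<open>Split the \<open>nT\<close> discounted periods seen by player \<open>i\<close> into \<open>n\<close> blocks of length \<open>T\<close>.
  The periods with offset \<open>t\<close> inside their block carry the extra discount \<open>\<delta>^t\<close>, and the
  profiles played in them form the \<open>n\<close>-sequence obtained from the \<open>nT\<close>-sequence by taking
  every \<open>T\<close>-th entry from offset \<open>t\<close>; player \<open>i\<close>'s payoff along it is exactly \<open>v\<^sub>i\<close>.
  So every \<open>U\<close>-vector is a convex combination of \<open>v\<close>-vectors with weights
  \<open>\<delta>^t / (\<Sum>t<T. \<delta>^t)\<close>. Conversely, repeating each profile of an \<open>n\<close>-sequence \<open>T\<close> times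
  turns all these subsequences into the original one, so every \<open>v\<close>-vector is a \<open>U\<close>-vector.\<close>

lemma sum_atLeast1_atMost_mult_blocks:
  fixes f :: "nat \<Rightarrow> 'b::comm_monoid_add"
  shows "(\<Sum>k=1..n*T. f k) = (\<Sum>j<n. \<Sum>t<T. f (j*T + t + 1))"
proof -
  have "(\<Sum>k=1..n*T. f k) = (\<Sum>k<n*T. f (Suc k))"
    by (simp add: sum.atLeast1_atMost_eq)
  also have "\<dots> = (\<Sum>j<n. \<Sum>k\<in>{j*T..<j*T+T}. f (Suc k))"
    by (simp add: sum.nat_group)
  also have "\<dots> = (\<Sum>j<n. \<Sum>t<T. f (j*T + t + 1))"
  proof (rule sum.cong[OF refl])
    fix j
    show "(\<Sum>k\<in>{j*T..<j*T+T}. f (Suc k)) = (\<Sum>t<T. f (j*T + t + 1))"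
      by (subst sum.atLeastLessThan_shift_0) (simp add: lessThan_atLeast0 add.commute)
  qed
  finally show ?thesis .
qed

lemma mult_add_mod_mult_blocks:
  fixes q t T n :: nat
  assumes "t < T"
  shows "(q*T + t) mod (n*T) = (q mod n)*T + t"
  using assms by (simp add: mod_mult2_eq[of _ T n] mult.commute[of n T])

definition decimate :: "nat \<Rightarrow> nat \<Rightarrow> nat \<Rightarrow> (nat \<Rightarrow> 'b) \<Rightarrow> nat \<Rightarrow> 'b" where
  "decimate T n t s = restrict (\<lambda>m. s ((m - 1)*T + t + 1)) {1..n}"

definition stretch :: "nat \<Rightarrow> nat \<Rightarrow> (nat \<Rightarrow> 'b) \<Rightarrow> nat \<Rightarrow> 'b" where
  "stretch T n b = restrict (\<lambda>k. b ((k - 1) div T + 1)) {1..n*T}"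

lemma block_index_in_range:
  fixes m t T n :: nat
  assumes "m \<in> {1..n}" and "t < T"
  shows "(m - 1)*T + t + 1 \<in> {1..n*T}"
proof -
  have "(m - 1)*T + t < m*T"
    using assms by (cases m) auto
  also have "\<dots> \<le> n*T"
    using assms by simp
  finally show ?thesis by simp
qed

lemma decimate_in_seqs:
  assumes "s \<in> seqs (n*T) P" and "t < T"
  shows "decimate T n t s \<in> seqs n P"
  using assms block_index_in_range unfolding seqs_def decimate_def by fastforce

lemma stretch_in_seqs:
  assumes "b \<in> seqs n P" and "T \<ge> 1"
  shows "stretch T n b \<in> seqs (n*T) P"
  unfolding seqs_def stretch_def
proof (rule PiE_I)
  fix k assume k: "k \<in> {1..n*T}"
  then have "k - 1 < n*T"
    by auto
  then have "(k - 1) div T < n"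
    using assms(2) by (simp add: div_less_iff_less_mult)
  then show "restrict (\<lambda>k. b ((k - 1) div T + 1)) {1..n*T} k \<in> P"
    using assms(1) k unfolding seqs_def by auto
qed auto

lemma decimate_stretch:
  assumes "b \<in> seqs n P" and "t < T"
  shows "decimate T n t (stretch T n b) = b"
proof
  fix m
  show "decimate T n t (stretch T n b) m = b m"
  proof (cases "m \<in> {1..n}")
    case True
    have "((m - 1)*T + t) div T = m - 1"
      using assms(2) by simp
    then show ?thesis
      using True block_index_in_range[OF True assms(2)]
      unfolding decimate_def stretch_def by simp
  next
    case False
    then show ?thesis
      using assms(1) unfolding decimate_def seqs_def by auto
  qed
qed

lemma Upay_eq_weighted_vpay_decimate:
  assumes "i \<ge> 1" and "n \<ge> 1"
  shows "Upay n T \<delta> u s i =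
         (\<Sum>t<T. (\<delta>^t / (\<Sum>t<T. \<delta>^t)) * vpay n T \<delta> u (decimate T n t s) i)"
proof -
  define g where "g j t = u i (s (((i - 1 + j) mod n)*T + t + 1))" for j t
  have U_num: "(\<Sum>k=1..n*T. \<delta>^(k - 1) * u i (per (n*T) s ((i - 1)*T + k)))
      = (\<Sum>j<n. \<Sum>t<T. \<delta>^t * (\<delta>^(j*T) * g j t))"
  proof -
    have per_block: "per (n*T) s ((i - 1)*T + (j*T + t + 1)) = s (((i - 1 + j) mod n)*T + t + 1)"
      if "t < T" for j t
    proof -
      have index: "(i - 1)*T + (j*T + t + 1) - 1 = (i - 1 + j)*T + t"
        by (simp add: algebra_simps)
      have "per (n*T) s ((i - 1)*T + (j*T + t + 1)) = s (((i - 1 + j)*T + t) mod (n*T) + 1)"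
        unfolding per_def index ..
      then show ?thesis
        using mult_add_mod_mult_blocks[OF that] by simp
    qed
    have "(\<Sum>k=1..n*T. \<delta>^(k - 1) * u i (per (n*T) s ((i - 1)*T + k)))
        = (\<Sum>j<n. \<Sum>t<T. \<delta>^(j*T + t) * u i (per (n*T) s ((i - 1)*T + (j*T + t + 1))))"
      using sum_atLeast1_atMost_mult_blocks[of "\<lambda>k. \<delta>^(k - 1) * u i (per (n*T) s ((i - 1)*T + k))"]
      by simp
    also have "\<dots> = (\<Sum>j<n. \<Sum>t<T. \<delta>^t * (\<delta>^(j*T) * g j t))"
      using per_block by (intro sum.cong refl) (simp add: g_def power_add)
    finally show ?thesis .
  qed
  have U_den: "(\<Sum>k=1..n*T. \<delta>^(k - 1)) = (\<Sum>j<n. \<delta>^(j*T)) * (\<Sum>t<T. \<delta>^t)"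
    using sum_atLeast1_atMost_mult_blocks[of "\<lambda>k. \<delta>^(k - 1)" n T]
    by (simp add: power_add sum_product)
  have v_decimate: "vpay n T \<delta> u (decimate T n t s) i = (\<Sum>j<n. \<delta>^(j*T) * g j t) / (\<Sum>j<n. \<delta>^(j*T))"
    for t
  proof -
    have "per n (decimate T n t s) (i + Suc j - 1) = s (((i - 1 + j) mod n)*T + t + 1)" for j
    proof -
      have "i + Suc j - 1 - 1 = i - 1 + j"
        using assms(1) by simp
      moreover have "(i - 1 + j) mod n < n"
        using assms(2) by simp
      ultimately show ?thesis
        unfolding per_def decimate_def by simp
    qed
    then show ?thesis
      unfolding vpay_def g_def by (simp add: sum.atLeast1_atMost_eq)
  qed
  have swap_blocks: "(\<Sum>j<n. \<Sum>t<T. \<delta>^t * (\<delta>^(j*T) * g j t)) / (Dv * Dt)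
      = (\<Sum>t<T. (\<delta>^t / Dt) * ((\<Sum>j<n. \<delta>^(j*T) * g j t) / Dv))" for Dv Dt :: real
    by (simp add: sum_distrib_left sum_divide_distrib sum.swap[of _ "{..<n}"] mult.commute[of Dt Dv])
  show ?thesis
    unfolding Upay_def U_num U_den v_decimate swap_blocks ..
qed

lemma Upay_stretch:
  assumes "i \<ge> 1" and "n \<ge> 1" and "T \<ge> 1" and "\<delta> > 0" and "b \<in> seqs n P"
  shows "Upay n T \<delta> u (stretch T n b) i = vpay n T \<delta> u b i"
proof -
  have "(\<Sum>t<T. \<delta>^t) > 0"
    using assms(3,4) by (intro sum_pos) (auto simp: lessThan_empty_iff)
  then show ?thesis
    using assms(5)
    by (simp add: Upay_eq_weighted_vpay_decimate[OF assms(1,2)] decimate_stretch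
        flip: sum_distrib_right sum_divide_distrib)
qed

lemma vec_of_cong:
  assumes "bij_betw pl {1..n} (UNIV :: 'n::finite set)"
    and "\<And>i. i \<in> {1..n} \<Longrightarrow> f i = g i"
  shows "vec_of pl n f = vec_of pl n g"
proof -
  have "the_inv_into {1..n} pl j \<in> {1..n}" for j
    using assms(1) the_inv_into_into[of pl "{1..n}" j "{1..n}"] by (simp add: bij_betw_def)
  then show ?thesis
    unfolding vec_of_def using assms(2) by simp
qed

lemma vec_of_sum_scaled:
  "vec_of pl n (\<lambda>i. \<Sum>t\<in>S. c t * f t i) = (\<Sum>t\<in>S. c t *\<^sub>R vec_of pl n (f t))"
  by (simp add: vec_eq_iff vec_of_def sum_component)

theorem theorem1:
  fixes n T :: nat and \<delta> :: real
    and Ai :: "nat \<Rightarrow> 'a set"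
    and u :: "nat \<Rightarrow> (nat \<Rightarrow> 'a) \<Rightarrow> real"
    and pl :: "nat \<Rightarrow> 'n::finite"
  assumes "n \<ge> 2"
    and "bij_betw pl {1..n} (UNIV :: 'n set)"
    and "\<And>i. i \<in> {1..n} \<Longrightarrow> finite (Ai i) \<and> Ai i \<noteq> {}"
    and "0 < \<delta>" and "\<delta> \<le> 1"
    and "T \<ge> 1"
  shows "Fset pl n Ai u \<delta> T =
         convex hull ((\<lambda>s. vec_of pl n (vpay n T \<delta> u s)) ` seqs n (profiles n Ai))"
proof -
  define V where "V = (\<lambda>s. vec_of pl n (vpay n T \<delta> u s)) ` seqs n (profiles n Ai)"
  define W where "W = (\<lambda>s. vec_of pl n (Upay n T \<delta> u s)) ` seqs (n*T) (profiles n Ai)"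
  define w where "w t = \<delta>^t / (\<Sum>t<T. \<delta>^t)" for t
  have "(\<Sum>t<T. \<delta>^t) > 0"
    using assms(4,6) by (intro sum_pos) (auto simp: lessThan_empty_iff)
  then have w_nonneg: "w t \<ge> 0" and w_sum: "(\<Sum>t<T. w t) = 1" for t
    using assms(4) by (simp_all add: w_def flip: sum_divide_distrib)
  have U_convex_comb: "vec_of pl n (Upay n T \<delta> u s) =
      (\<Sum>t<T. w t *\<^sub>R vec_of pl n (vpay n T \<delta> u (decimate T n t s)))" for s
    using assms(1) unfolding w_def vec_of_sum_scaled[symmetric]
    by (intro vec_of_cong[OF assms(2)] Upay_eq_weighted_vpay_decimate) auto
  have "W \<subseteq> convex hull V"
    unfolding W_def V_def U_convex_comb
    by (auto intro!: convex_sum intro: hull_inc decimate_in_seqs simp: w_nonneg w_sum)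
  moreover have "V \<subseteq> W"
  proof
    fix x assume "x \<in> V"
    then obtain b where b: "b \<in> seqs n (profiles n Ai)" and x: "x = vec_of pl n (vpay n T \<delta> u b)"
      unfolding V_def by auto
    have "x = vec_of pl n (Upay n T \<delta> u (stretch T n b))"
      unfolding x using assms(1,4,6) b
      by (intro vec_of_cong[OF assms(2)]) (simp add: Upay_stretch)
    then show "x \<in> W"
      unfolding W_def using stretch_in_seqs[OF b assms(6)] by blast
  qed
  ultimately show ?thesis
    unfolding Fset_def V_def[symmetric] W_def[symmetric]
    by (meson convex_hull_subset hull_mono subset_antisym)
qed

end
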